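(* Let $(V,Y,\mathbf 1,\omega)$ be a vertex operator algebra of central charge $c\ne0$. Then $g(V)_{\ge0}W=W$ for every weak $V$-module $W$; in particular $g(V)_{\ge0}V=V$.
   Context: A weak $V$-module is a module for $V$ regarded as a vertex algebra. For a weak module $W$, $g(V)_{\ge0}W=\mathrm{span}\{v_nw\mid v\in V,\ n\ge0,\ w\in W\}$, where $Y_W(v,x)=\sum_nv_nx^{-n-1}$. *)

theory Defs
  imports Complex_Main "HOL-Library.Groups_Big_Fun"
begin

text \<open>Modes: a vertex operator is encoded by its modes, Y(u,x) = sum_n (Y u n) x^(-n-1).
  The Jacobi identity is encoded by its component form (Borcherds identity), for all
  integers l m n; all sums are finite by the truncation conditions.\<close>

definition borcherds ::
  "(complex \<Rightarrow> 'w::ab_group_add \<Rightarrow> 'w) \<Rightarrow> ('v \<Rightarrow> int \<Rightarrow> 'v \<Rightarrow> 'v)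
   \<Rightarrow> ('v \<Rightarrow> int \<Rightarrow> 'w \<Rightarrow> 'w) \<Rightarrow> bool" where
  "borcherds sW Y YW \<longleftrightarrow> (\<forall>u v w l m n.
     Sum_any (\<lambda>i::nat. sW ((of_int m) gchoose i) (YW (Y u (l + int i) v) (m + n - int i) w))
   = Sum_any (\<lambda>i::nat. sW ((-1) ^ i * ((of_int l) gchoose i))
                         (YW u (l + m - int i) (YW v (n + int i) w)))
   - Sum_any (\<lambda>i::nat. sW ((-1) powi (l + int i) * ((of_int l) gchoose i))
                         (YW v (l + n - int i) (YW u (m + int i) w))))"

text \<open>Vertex operator algebra (V, Y, vac, om) of central charge c over the complex numbers
  (Frenkel--Lepowsky--Meurman / Lepowsky--Li), with V_(n) the L(0)-eigenspace of eigenvalue n,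
  where L(n) = om_(n+1).\<close>

definition is_VOA ::
  "(complex \<Rightarrow> 'v::ab_group_add \<Rightarrow> 'v) \<Rightarrow> ('v \<Rightarrow> int \<Rightarrow> 'v \<Rightarrow> 'v) \<Rightarrow> 'v \<Rightarrow> 'v \<Rightarrow> complex \<Rightarrow> bool"
  where
  "is_VOA sV Y vac om c \<longleftrightarrow>
     vector_space sV
   \<and> (\<forall>u n. Vector_Spaces.linear sV sV (Y u n))
   \<and> (\<forall>n w. Vector_Spaces.linear sV sV (\<lambda>u. Y u n w))
   \<and> (\<forall>u v. \<exists>N. \<forall>n\<ge>N. Y u n v = 0)
   \<and> (\<forall>n v. Y vac n v = (if n = -1 then v else 0))
   \<and> (\<forall>v n. n \<ge> 0 \<longrightarrow> Y v n vac = 0)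
   \<and> (\<forall>v. Y v (-1) vac = v)
   \<and> borcherds sV Y Y
   \<and> (\<forall>m n v. Y om (m+1) (Y om (n+1) v) - Y om (n+1) (Y om (m+1) v)
        = sV (of_int (m - n)) (Y om (m+n+1) v)
          + sV (if m + n = 0 then (of_int (m^3 - m) / 12) * c else 0) v)
   \<and> (\<forall>v n w. Y (Y om 0 v) n w = sV (- of_int n) (Y v (n - 1) w))
   \<and> module.span sV (\<Union>n::int. {v. Y om 1 v = sV (of_int n) v}) = UNIV
   \<and> (\<forall>n::int. \<exists>B. finite B \<and> {v. Y om 1 v = sV (of_int n) v} \<subseteq> module.span sV B)
   \<and> (\<exists>N::int. \<forall>n<N. {v. Y om 1 v = sV (of_int n) v} = {0})"

text \<open>Weak module: module for V regarded as a vertex algebra.\<close>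

definition is_weak_module ::
  "(complex \<Rightarrow> 'v::ab_group_add \<Rightarrow> 'v) \<Rightarrow> ('v \<Rightarrow> int \<Rightarrow> 'v \<Rightarrow> 'v) \<Rightarrow> 'v
   \<Rightarrow> (complex \<Rightarrow> 'w::ab_group_add \<Rightarrow> 'w) \<Rightarrow> ('v \<Rightarrow> int \<Rightarrow> 'w \<Rightarrow> 'w) \<Rightarrow> bool" where
  "is_weak_module sV Y vac sW YW \<longleftrightarrow>
     vector_space sW
   \<and> (\<forall>u n. Vector_Spaces.linear sW sW (YW u n))
   \<and> (\<forall>n w. Vector_Spaces.linear sV sW (\<lambda>u. YW u n w))
   \<and> (\<forall>u w. \<exists>N. \<forall>n\<ge>N. YW u n w = 0)
   \<and> (\<forall>n w. YW vac n w = (if n = -1 then w else 0))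
   \<and> borcherds sW Y YW"

definition gV_nonneg ::
  "(complex \<Rightarrow> 'w::ab_group_add \<Rightarrow> 'w) \<Rightarrow> ('v \<Rightarrow> int \<Rightarrow> 'w \<Rightarrow> 'w) \<Rightarrow> 'w set" where
  "gV_nonneg sW YW = module.span sW {YW v n w | v n w. n \<ge> 0}"

end

theory Submission
  imports Defs
begin

text \<open>The conformal vector gives \<open>\<omega>\<^sub>3 \<omega> = (c/2) \<one>\<close> and \<open>\<omega>\<^sub>k \<omega> = 0\<close> for \<open>k > 3\<close>.
  Taking \<open>u = v = \<omega>\<close>, \<open>l = 3\<close> and \<open>m = -1 - n\<close> in the Borcherds identity, the left-hand
  side collapses to \<open>(c/2) \<one>\<^sub>-\<^sub>1 w = (c/2) w\<close>. For \<open>n\<close> large the first sum on the right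
  vanishes by truncation, and every term \<open>\<omega>\<^sub>3\<^sub>+\<^sub>n\<^sub>-\<^sub>i \<omega>\<^sub>m\<^sub>+\<^sub>i w\<close> of the second sum has
  \<open>i \<le> 3\<close>, hence a non-negative outer mode. So \<open>(c/2) w \<in> g(V)\<^sub>\<ge>\<^sub>0 W\<close>, and \<open>c \<noteq> 0\<close>
  finishes the argument. The same works for any \<open>u, v \<in> V\<close> and \<open>p \<ge> 0\<close> such that \<open>u\<^sub>p v\<close> is
  a nonzero multiple of \<open>\<one>\<close> and \<open>u\<^sub>k v = 0\<close> for \<open>k > p\<close>.\<close>

lemma linear_zero: "Vector_Spaces.linear s1 s2 f \<Longrightarrow> f 0 = 0"
  by (simp add: linear_iff_module_hom module_hom.zero)

lemma linear_scale: "Vector_Spaces.linear s1 s2 f \<Longrightarrow> f (s1 c x) = s2 c (f x)"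
  by (simp add: linear_iff_module_hom module_hom.scale)

lemma Sum_any_in_span:
  assumes "vector_space s" and "\<And>i. f i \<in> module.span s S"
  shows "Sum_any f \<in> module.span s S"
proof -
  interpret vector_space s by fact
  show ?thesis
  proof (cases "finite {i. f i \<noteq> 0}")
    case True
    then show ?thesis unfolding Sum_any.expand_set using assms(2) by (intro span_sum) auto
  next
    case False
    then show ?thesis using span_zero by simp
  qed
qed

lemma is_VOA_imp_weak_module:
  assumes "is_VOA sV Y vac om c"
  shows "is_weak_module sV Y vac sV Y"
  using assms unfolding is_VOA_def is_weak_module_def by simp

lemma VOA_conformal_modes_conformal:
  assumes "is_VOA sV Y vac om c" and "k \<ge> 3"
  shows "Y om k om = (if k = 3 then sV (c / 2) vac else 0)"
proof -
  have lin: "\<And>u n. Vector_Spaces.linear sV sV (Y u n)"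
    and creation: "\<And>v n. n \<ge> 0 \<Longrightarrow> Y v n vac = 0"
    and vac_mode: "\<And>v. Y v (-1) vac = v"
    and vir: "\<And>m n v. Y om (m+1) (Y om (n+1) v) - Y om (n+1) (Y om (m+1) v)
        = sV (of_int (m - n)) (Y om (m+n+1) v)
          + sV (if m + n = 0 then (of_int (m^3 - m) / 12) * c else 0) v"
    using assms(1) unfolding is_VOA_def by auto
  interpret vector_space sV
    using assms(1) unfolding is_VOA_def by simp
  \<comment> \<open>the Virasoro relation for \<open>[L(k-1), L(-2)]\<close> applied to the vacuum, where \<open>L(-2) \<one> = \<omega>\<close>\<close>
  have "Y om k (Y om (-1) vac) - Y om (-1) (Y om k vac)
        = sV (of_int (k + 1)) (Y om (k - 2) vac)
          + sV (if k = 3 then (of_int ((k-1)^3 - (k-1)) / 12) * c else 0) vac"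
    using vir[of "k - 1" "-2" vac] by (simp add: add.commute)
  then show ?thesis
    using assms(2) creation linear_zero[OF lin] vac_mode by simp
qed

lemma borcherds_lhs_vacuum_mode:
  assumes wm: "is_weak_module sV Y vac sW YW"
    and top: "Y u (int p) v = sV s vac"
    and above_top: "\<And>k. k > int p \<Longrightarrow> Y u k v = 0"
    and "m + n = -1"
  shows "sW s w
    = Sum_any (\<lambda>i::nat. sW ((-1) ^ i * (of_nat p gchoose i))
                         (YW u (int p + m - int i) (YW v (n + int i) w)))
    - Sum_any (\<lambda>i::nat. sW ((-1) powi (int p + int i) * (of_nat p gchoose i))
                         (YW v (int p + n - int i) (YW u (m + int i) w)))"
proof -
  have linV: "\<And>n w. Vector_Spaces.linear sV sW (\<lambda>u. YW u n w)"
    and vac_mode: "\<And>n w. YW vac n w = (if n = -1 then w else 0)"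
    and bor: "borcherds sW Y YW"
    using wm unfolding is_weak_module_def by auto
  interpret vector_space sW
    using wm unfolding is_weak_module_def by simp
  have collapse: "(\<lambda>i::nat. sW (of_int m gchoose i) (YW (Y u (int p + int i) v) (m + n - int i) w))
      = (\<lambda>i. if i = 0 then sW s w else 0)"
  proof
    fix i :: nat
    show "sW (of_int m gchoose i) (YW (Y u (int p + int i) v) (m + n - int i) w)
        = (if i = 0 then sW s w else 0)"
      using top above_top[of "int p + int i"] linear_scale[OF linV] linear_zero[OF linV]
        vac_mode \<open>m + n = -1\<close> by auto
  qed
  have lhs: "Sum_any (\<lambda>i::nat. sW (of_int m gchoose i) (YW (Y u (int p + int i) v) (m + n - int i) w))
      = sW s w"
    unfolding collapse by (rule Sum_any.delta)
  show ?thesis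
    using bor[unfolded borcherds_def, rule_format,
        where u = u and v = v and w = w and l = "int p" and m = m and n = n]
    by (simp only: lhs of_int_of_nat_eq)
qed

lemma borcherds_tail_in_gV_nonneg:
  assumes "vector_space sW" and "n \<ge> 0"
  shows "Sum_any (\<lambda>i::nat. sW ((-1) powi (int p + int i) * (of_nat p gchoose i))
                         (YW v (int p + n - int i) (YW u (m + int i) w))) \<in> gV_nonneg sW YW"
  unfolding gV_nonneg_def
proof (rule Sum_any_in_span[OF assms(1)])
  interpret vector_space sW by fact
  fix i :: nat
  show "sW ((-1) powi (int p + int i) * (of_nat p gchoose i))
          (YW v (int p + n - int i) (YW u (m + int i) w)) \<in> span {YW v n w | v n w. n \<ge> 0}"
  proof (cases "i \<le> p")
    case True
    then have "YW v (int p + n - int i) (YW u (m + int i) w) \<in> {YW v n w | v n w. n \<ge> 0}"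
      using \<open>n \<ge> 0\<close> by force
    then show ?thesis by (intro span_scale span_base)
  next
    case False
    then have "(of_nat p gchoose i :: complex) = 0"
      by (simp flip: binomial_gbinomial)
    then show ?thesis using span_zero by simp
  qed
qed

lemma weak_module_gV_nonneg_eq_UNIV:
  assumes wm: "is_weak_module sV Y vac sW YW"
    and top: "Y u (int p) v = sV s vac"
    and above_top: "\<And>k. k > int p \<Longrightarrow> Y u k v = 0"
    and "s \<noteq> 0"
  shows "gV_nonneg sW YW = UNIV"
proof -
  have vs: "vector_space sW"
    and lin: "\<And>u n. Vector_Spaces.linear sW sW (YW u n)"
    and truncation: "\<And>u w. \<exists>N. \<forall>n\<ge>N. YW u n w = 0"
    using wm unfolding is_weak_module_def by auto
  interpret vector_space sW by (rule vs)
  have "w \<in> gV_nonneg sW YW" for w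
  proof -
    obtain N where N: "\<And>n. n \<ge> N \<Longrightarrow> YW v n w = 0"
      using truncation by blast
    define n where "n = max N 0"
    define m where "m = -1 - n"
    have "n \<ge> 0" and "m + n = -1" by (simp_all add: n_def m_def)
    let ?tail = "Sum_any (\<lambda>i::nat. sW ((-1) powi (int p + int i) * (of_nat p gchoose i))
                                  (YW v (int p + n - int i) (YW u (m + int i) w)))"
    have "sW s w
      = Sum_any (\<lambda>i::nat. sW ((-1) ^ i * (of_nat p gchoose i))
                           (YW u (int p + m - int i) (YW v (n + int i) w))) - ?tail"
      by (rule borcherds_lhs_vacuum_mode[OF wm top above_top \<open>m + n = -1\<close>])
    also have "\<dots> = - ?tail"
      using N linear_zero[OF lin] by (simp add: n_def)
    finally have "sW s w = - ?tail" .
    moreover have "?tail \<in> gV_nonneg sW YW"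
      by (rule borcherds_tail_in_gV_nonneg[OF vs \<open>n \<ge> 0\<close>])
    ultimately have "sW s w \<in> gV_nonneg sW YW"
      unfolding gV_nonneg_def by (simp add: span_neg)
    then have "sW (inverse s) (sW s w) \<in> gV_nonneg sW YW"
      unfolding gV_nonneg_def by (rule span_scale)
    then show ?thesis using \<open>s \<noteq> 0\<close> by simp
  qed
  then show ?thesis by auto
qed

theorem mainTheorem10:
  fixes sV :: "complex \<Rightarrow> 'v::ab_group_add \<Rightarrow> 'v"
    and Y :: "'v \<Rightarrow> int \<Rightarrow> 'v \<Rightarrow> 'v"
    and vac om :: 'v and c :: complex
    and sW :: "complex \<Rightarrow> 'w::ab_group_add \<Rightarrow> 'w"
    and YW :: "'v \<Rightarrow> int \<Rightarrow> 'w \<Rightarrow> 'w"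
  assumes "is_VOA sV Y vac om c"
    and "c \<noteq> 0"
    and "is_weak_module sV Y vac sW YW"
  shows "gV_nonneg sW YW = UNIV \<and> gV_nonneg sV Y = UNIV"
proof -
  have top: "Y om (int 3) om = sV (c / 2) vac"
    using VOA_conformal_modes_conformal[OF assms(1)] by simp
  have above_top: "Y om k om = 0" if "k > int 3" for k
    using VOA_conformal_modes_conformal[OF assms(1), of k] that by simp
  have "c / 2 \<noteq> 0" using assms(2) by simp
  then show ?thesis
    using weak_module_gV_nonneg_eq_UNIV[OF assms(3) top above_top]
      weak_module_gV_nonneg_eq_UNIV[OF is_VOA_imp_weak_module[OF assms(1)] top above_top]
    by simp
qed

end
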